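(* For all $T\in\mathcal{T}_H$ and all $j\in\{2,\dots,N\}$ it holds $\mathcal{P}_Hb_{j,T}=b_{j,T}$.
   Context: $\mathcal{T}_H$ is a quasi-uniform non-degenerate quadrilateral mesh of a polygonal Lipschitz domain $D\subset\mathbb{R}^d$, mesh size $H$. For fixed $p\in\mathbb{N}_0$, $\mathcal{V}_H$ is the space of elementwise polynomials of coordinate degree $\le p$, $\Pi_H$ the elementwise $L^2$-projection onto $\mathcal{V}_H$, and $\{\Lambda_{j,T}\}_{j=1}^N$, $N=(p+1)^d$, the $L^2(T)$-orthonormal shifted tensor-product Legendre basis on $T$, with $\Lambda_{1,T}$ the constant function. For each $T,j$, $b_{j,T}\in H^1_0(T)$ (extended by zero) satisfies $\Pi_Hb_{j,T}=\Lambda_{j,T}$. $\mathcal{B}_Hv:=\sum_T\sum_j(\int_Tv\Lambda_{j,T}dx)b_{j,T}$. $\Pi_H^0$ is the $L^2$-projection onto piecewise constants; $\mathcal{E}_H$ maps a piecewise constant function to the continuous piecewise bilinear function whose value at an interior node is the average of the adjacent elementwise values and which vanishes at boundary nodes; $\mathcal{I}_H:=\mathcal{E}_H\circ\Pi_H^0$ and $\mathcal{P}_Hv:=\mathcal{I}_Hv+\mathcal{B}_H(v-\mathcal{I}_Hv)$. *)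

theory Defs
  imports "HOL-Analysis.Analysis"
begin

definition is_mesh :: "'a::euclidean_space set set \<Rightarrow> 'a set \<Rightarrow> bool" where
  "is_mesh Th D \<longleftrightarrow>
     finite Th \<and> Th \<noteq> {} \<and>
     (\<forall>T\<in>Th. \<exists>a b. T = cbox a b \<and> (\<forall>i\<in>Basis. a \<bullet> i < b \<bullet> i)) \<and>
     (\<forall>T\<in>Th. \<forall>T'\<in>Th. T \<noteq> T' \<longrightarrow>
         interior T \<inter> interior T' = {} \<and> (T \<inter> T') face_of T \<and> (T \<inter> T') face_of T') \<and>
     \<Union>Th = closure D \<and> D = interior (\<Union>Th) \<and> connected D"

definition lo :: "'a::euclidean_space set \<Rightarrow> 'a \<Rightarrow> real" where
  "lo T i = Inf ((\<lambda>x. x \<bullet> i) ` T)"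

definition hi :: "'a::euclidean_space set \<Rightarrow> 'a \<Rightarrow> real" where
  "hi T i = Sup ((\<lambda>x. x \<bullet> i) ` T)"

definition MI :: "nat \<Rightarrow> ('a::euclidean_space \<Rightarrow> nat) set" where
  "MI p = {\<alpha>. (\<forall>i\<in>Basis. \<alpha> i \<le> p) \<and> (\<forall>i. i \<notin> Basis \<longrightarrow> \<alpha> i = 0)}"

definition mono :: "('a::euclidean_space \<Rightarrow> nat) \<Rightarrow> 'a \<Rightarrow> real" where
  "mono \<alpha> x = (\<Prod>i\<in>Basis. (x \<bullet> i) ^ (\<alpha> i))"

definition Qp :: "nat \<Rightarrow> ('a::euclidean_space \<Rightarrow> real) \<Rightarrow> bool" where
  "Qp p q \<longleftrightarrow> (\<exists>c. \<forall>x. q x = (\<Sum>\<alpha>\<in>MI p. c \<alpha> * mono \<alpha> x))"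

text \<open>The space V_H of elementwise polynomials (as functions on D, modulo
  values on the null set of element boundaries).\<close>
definition VH :: "'a::euclidean_space set set \<Rightarrow> 'a set \<Rightarrow> nat \<Rightarrow> ('a \<Rightarrow> real) \<Rightarrow> bool" where
  "VH Th D p w \<longleftrightarrow>
     (\<lambda>x. indicator D x * w x) \<in> borel_measurable lebesgue \<and>
     (\<forall>T\<in>Th. \<exists>q. Qp p q \<and> (\<forall>x\<in>interior T. w x = q x))"

definition L2proj :: "'a::euclidean_space set set \<Rightarrow> 'a set \<Rightarrow> nat \<Rightarrow> ('a \<Rightarrow> real) \<Rightarrow> ('a \<Rightarrow> real) \<Rightarrow> bool" where
  "L2proj Th D p v w \<longleftrightarrow>
     VH Th D p w \<and> (\<forall>q. VH Th D p q \<longrightarrow> (LINT x:D|lebesgue. (v x - w x) * q x) = 0)"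

text \<open>Shifted Legendre polynomial on [0,1].\<close>
definition shleg :: "nat \<Rightarrow> real \<Rightarrow> real" where
  "shleg n t = (-1) ^ n * (\<Sum>k\<le>n. real (n choose k) * real ((n + k) choose k) * (- t) ^ k)"

text \<open>L2([a,b])-normalised Legendre polynomial of degree n on [a,b].\<close>
definition leg1 :: "nat \<Rightarrow> real \<Rightarrow> real \<Rightarrow> real \<Rightarrow> real" where
  "leg1 n a b x = sqrt ((2 * real n + 1) / (b - a)) * shleg n ((x - a) / (b - a))"

definition legTP :: "('a::euclidean_space \<Rightarrow> nat) \<Rightarrow> 'a set \<Rightarrow> 'a \<Rightarrow> real" where
  "legTP \<alpha> T x = (\<Prod>i\<in>Basis. leg1 (\<alpha> i) (lo T i) (hi T i) (x \<bullet> i))"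

definition legendre_enum :: "nat \<Rightarrow> (nat \<Rightarrow> 'a::euclidean_space \<Rightarrow> nat) \<Rightarrow> bool" where
  "legendre_enum p \<iota> \<longleftrightarrow> bij_betw \<iota> {1..(p + 1) ^ DIM('a)} (MI p) \<and> \<iota> 1 = (\<lambda>_. 0)"

definition Lam :: "(nat \<Rightarrow> 'a::euclidean_space \<Rightarrow> nat) \<Rightarrow> nat \<Rightarrow> 'a set \<Rightarrow> 'a \<Rightarrow> real" where
  "Lam \<iota> j T = legTP (\<iota> j) T"

definition sq_int :: "('a::euclidean_space \<Rightarrow> real) \<Rightarrow> bool" where
  "sq_int f \<longleftrightarrow> f \<in> borel_measurable lebesgue \<and> integrable lebesgue (\<lambda>x. (f x)\<^sup>2)"

definition C1c :: "('a::euclidean_space \<Rightarrow> real) \<Rightarrow> ('a \<Rightarrow> 'a \<Rightarrow> real) \<Rightarrow> bool" where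
  "C1c \<phi> \<phi>' \<longleftrightarrow> (\<forall>x. (\<phi> has_derivative \<phi>' x) (at x)) \<and>
     (\<forall>i\<in>Basis. continuous_on UNIV (\<lambda>x. \<phi>' x i)) \<and>
     (\<exists>K. compact K \<and> (\<forall>x. x \<notin> K \<longrightarrow> \<phi> x = 0))"

definition H1 :: "('a::euclidean_space \<Rightarrow> real) \<Rightarrow> bool" where
  "H1 v \<longleftrightarrow> sq_int v \<and>
     (\<exists>G :: 'a \<Rightarrow> 'a. (\<forall>i\<in>Basis. sq_int (\<lambda>x. G x \<bullet> i)) \<and>
        (\<forall>\<phi> \<phi>'. C1c \<phi> \<phi>' \<longrightarrow> (\<forall>i\<in>Basis.
            (LINT x|lebesgue. v x * \<phi>' x i) = - (LINT x|lebesgue. (G x \<bullet> i) * \<phi> x))))"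

definition H10 :: "'a::euclidean_space set \<Rightarrow> ('a \<Rightarrow> real) \<Rightarrow> bool" where
  "H10 T v \<longleftrightarrow> (\<forall>x. x \<notin> T \<longrightarrow> v x = 0) \<and> H1 v"

text \<open>Elementwise L2-projection onto constants: the value on each element.\<close>
definition Pi0 :: "('a::euclidean_space \<Rightarrow> real) \<Rightarrow> 'a set \<Rightarrow> real" where
  "Pi0 v T = (LINT x:T|lebesgue. v x) / measure lebesgue T"

definition verts :: "'a::euclidean_space set \<Rightarrow> 'a set" where
  "verts T = {z. \<forall>i\<in>Basis. z \<bullet> i = lo T i \<or> z \<bullet> i = hi T i}"

definition nodal :: "'a::euclidean_space set set \<Rightarrow> 'a set \<Rightarrow> ('a set \<Rightarrow> real) \<Rightarrow> 'a \<Rightarrow> real" where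
  "nodal Th D c z =
     (if z \<in> D then (\<Sum>T\<in>{T\<in>Th. z \<in> T}. c T) / real (card {T\<in>Th. z \<in> T}) else 0)"

definition qinterp :: "'a::euclidean_space set \<Rightarrow> ('a \<Rightarrow> real) \<Rightarrow> 'a \<Rightarrow> real" where
  "qinterp T nv x = (\<Sum>z\<in>verts T. nv z *
      (\<Prod>i\<in>Basis. if z \<bullet> i = lo T i then (hi T i - x \<bullet> i) / (hi T i - lo T i)
                                   else (x \<bullet> i - lo T i) / (hi T i - lo T i)))"

definition EH :: "'a::euclidean_space set set \<Rightarrow> 'a set \<Rightarrow> ('a set \<Rightarrow> real) \<Rightarrow> 'a \<Rightarrow> real" where
  "EH Th D c x = (if x \<in> \<Union>Th then qinterp (SOME T. T \<in> Th \<and> x \<in> T) (nodal Th D c) x else 0)"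

definition IH :: "'a::euclidean_space set set \<Rightarrow> 'a set \<Rightarrow> ('a \<Rightarrow> real) \<Rightarrow> 'a \<Rightarrow> real" where
  "IH Th D v = EH Th D (Pi0 v)"

definition BH :: "'a::euclidean_space set set \<Rightarrow> nat \<Rightarrow> (nat \<Rightarrow> 'a \<Rightarrow> nat)
                   \<Rightarrow> (nat \<Rightarrow> 'a set \<Rightarrow> 'a \<Rightarrow> real) \<Rightarrow> ('a \<Rightarrow> real) \<Rightarrow> 'a \<Rightarrow> real" where
  "BH Th p \<iota> bf v x = (\<Sum>T\<in>Th. \<Sum>j\<in>{1..(p + 1) ^ DIM('a)}.
        (LINT y:T|lebesgue. v y * Lam \<iota> j T y) * bf j T x)"

definition PH :: "'a::euclidean_space set set \<Rightarrow> 'a set \<Rightarrow> nat \<Rightarrow> (nat \<Rightarrow> 'a \<Rightarrow> nat)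
                   \<Rightarrow> (nat \<Rightarrow> 'a set \<Rightarrow> 'a \<Rightarrow> real) \<Rightarrow> ('a \<Rightarrow> real) \<Rightarrow> 'a \<Rightarrow> real" where
  "PH Th D p \<iota> bf v x = IH Th D v x + BH Th p \<iota> bf (\<lambda>y. v y - IH Th D v y) x"

end

theory Submission
  imports Defs "HOL-Computational_Algebra.Polynomial"
begin

(* The bubble b = b_{j,T} vanishes outside T and its L2-projection onto V_H is Lambda_{j,T}
   extended by zero. Testing this with Lambda_{k,T} and using that the tensor-product Legendre
   basis is L2(T)-orthonormal gives int_T b Lambda_{k,T} = delta_{jk}, while every moment of b
   over another element vanishes. As Lambda_{1,T} is a nonzero constant and j <> 1, all element
   means Pi^0_H b are zero, so I_H b = 0 and P_H b = B_H b = sum_k delta_{jk} b_{k,T} = b.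
   Orthonormality of the shifted Legendre polynomials on [0,1] follows from Rodrigues' formula
   by repeated integration by parts, and it carries over to boxes by Fubini. *)

section \<open>Shifted Legendre polynomials\<close>

lemma pochhammer_Suc_eq_fact_div:
  "pochhammer (of_nat (Suc i)) j = (fact (i + j) / fact i :: 'a::field_char_0)"
proof -
  have "fact (i + j) = (fact i * pochhammer (of_nat (Suc i)) j :: 'a)"
    by (simp add: pochhammer_fact pochhammer_product' add.commute)
  then show ?thesis by simp
qed

lemma coeff_higher_pderiv_fact:
  "coeff ((pderiv ^^ j) p) i = fact (i + j) / fact i * coeff (p :: 'a::field_char_0 poly) (i + j)"
  by (simp add: coeff_higher_pderiv pochhammer_Suc_eq_fact_div del: of_nat_Suc)

lemma higher_pderiv_eq_0: "degree p < j \<Longrightarrow> (pderiv ^^ j) p = 0"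
  by (rule poly_eqI) (simp add: coeff_higher_pderiv coeff_eq_0)

lemma pderiv_dvd_linear_power:
  assumes "[:c, 1:] ^ Suc k dvd (q :: 'a::{idom,semiring_char_0} poly)"
  shows "[:c, 1:] ^ k dvd pderiv q"
proof -
  obtain g where q: "q = [:c, 1:] ^ Suc k * g" using assms by (auto elim: dvdE)
  have "pderiv q = [:c, 1:] ^ k * ([:c, 1:] * pderiv g + smult (of_nat (Suc k)) g)"
    unfolding q pderiv_mult pderiv_power_Suc by (simp add: pderiv_pCons algebra_simps)
  then show ?thesis by simp
qed

lemma higher_pderiv_dvd_linear_power:
  fixes q :: "'a::{idom,semiring_char_0} poly"
  assumes "[:c, 1:] ^ m dvd q" "j \<le> m"
  shows "[:c, 1:] ^ (m - j) dvd (pderiv ^^ j) q"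
  using assms(2)
proof (induction j)
  case (Suc j)
  then have "[:c, 1:] ^ Suc (m - Suc j) dvd (pderiv ^^ j) q" by (simp add: Suc_diff_Suc)
  then show ?case by (simp add: pderiv_dvd_linear_power)
qed (use assms(1) in simp)

lemma poly_eq_sum_coeff_upto:
  fixes p :: "'a::comm_semiring_1 poly"
  assumes "degree p \<le> n"
  shows "poly p t = (\<Sum>k\<le>n. coeff p k * t ^ k)"
  unfolding poly_altdef using assms by (intro sum.mono_neutral_left) (auto simp: coeff_eq_0)

definition rodrigues_poly :: "nat \<Rightarrow> real poly" where
  "rodrigues_poly n = monom 1 n * [:-1, 1:] ^ n"

definition shleg_poly :: "nat \<Rightarrow> real poly" where
  "shleg_poly n = smult (1 / fact n) ((pderiv ^^ n) (rodrigues_poly n))"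

lemma degree_rodrigues_poly: "degree (rodrigues_poly n) \<le> n + n"
  unfolding rodrigues_poly_def
  by (rule order.trans[OF degree_mult_le])
     (auto intro: order.trans[OF degree_power_le] simp: degree_monom_eq)

lemma coeff_rodrigues_poly:
  "i \<le> n \<Longrightarrow> coeff (rodrigues_poly n) (n + i) = of_nat (n choose i) * (-1) ^ (n - i)"
  unfolding rodrigues_poly_def by (simp add: coeff_monom_mult coeff_linear_poly_power)

lemma degree_shleg_poly: "degree (shleg_poly n) \<le> n"
  using degree_rodrigues_poly[of n] by (simp add: shleg_poly_def degree_higher_pderiv)

lemma coeff_shleg_poly:
  assumes "k \<le> n"
  shows "coeff (shleg_poly n) k
    = (-1) ^ n * (real (n choose k) * real ((n + k) choose k) * (-1) ^ k)"
proof -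
  have "fact k * fact n * real ((n + k) choose k) = fact (n + k)"
    by (metis binomial_fact_lemma le_add2 add_diff_cancel_left' add.commute of_nat_fact of_nat_mult)
  then have binom: "fact (k + n) / (fact k * fact n) = real ((n + k) choose k)"
    by (simp add: field_simps add.commute)
  have sign: "(-1::real) ^ (n - k) = (-1) ^ n * (-1) ^ k"
    using assms by (auto simp: minus_one_power_iff even_diff_nat)
  have "coeff (shleg_poly n) k
      = fact (k + n) / (fact k * fact n) * coeff (rodrigues_poly n) (n + k)"
    by (simp add: shleg_poly_def coeff_higher_pderiv_fact add.commute)
  then show ?thesis using binom sign coeff_rodrigues_poly[OF assms] by simp
qed

lemma shleg_eq_poly: "shleg n t = poly (shleg_poly n) t"
  by (simp add: poly_eq_sum_coeff_upto[OF degree_shleg_poly] coeff_shleg_poly shleg_def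
      sum_distrib_left power_minus[of t] mult_ac)

definition integral01 :: "real poly \<Rightarrow> real" where
  "integral01 r = integral {0..1} (poly r)"

lemma poly_integrable_on: "poly r integrable_on {a..b :: real}"
  by (intro integrable_continuous_interval continuous_intros)

lemma integral01_add: "integral01 (p + q) = integral01 p + integral01 q"
proof -
  have "poly (p + q) = (\<lambda>x. poly p x + poly q x)" by auto
  then show ?thesis unfolding integral01_def by (simp add: integral_add poly_integrable_on)
qed

lemma integral01_smult: "integral01 (smult c p) = c * integral01 p"
proof -
  have "poly (smult c p) = (\<lambda>x. c * poly p x)" by auto
  then show ?thesis unfolding integral01_def by simp
qed

lemma integral01_uminus: "integral01 (- p) = - integral01 p"
  using integral01_smult[of "-1" p] by simp

lemma integral01_0: "integral01 0 = 0"
  using integral01_smult[of 0 0] by simp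

lemma integral01_pderiv: "integral01 (pderiv q) = poly q 1 - poly q 0"
proof -
  have "(poly (pderiv q) has_integral (poly q 1 - poly q 0)) {0..1}"
  proof (rule fundamental_theorem_of_calculus)
    fix x :: real
    have "(poly q has_real_derivative poly (pderiv q) x) (at x within {0..1})"
      using poly_DERIV[of q x] by (rule has_field_derivative_at_within)
    then show "(poly q has_vector_derivative poly (pderiv q) x) (at x within {0..1})"
      by (simp add: has_real_derivative_iff_has_vector_derivative)
  qed simp
  then show ?thesis unfolding integral01_def by (rule integral_unique)
qed

lemma integral01_by_parts:
  "integral01 (p * pderiv q) = poly (p * q) 1 - poly (p * q) 0 - integral01 (pderiv p * q)"
  using integral01_pderiv[of "p * q"] by (simp add: pderiv_mult integral01_add mult.commute)

lemma higher_pderiv_rodrigues_poly_vanishes: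
  assumes "j < n"
  shows "poly ((pderiv ^^ j) (rodrigues_poly n)) 0 = 0"
    and "poly ((pderiv ^^ j) (rodrigues_poly n)) 1 = 0"
proof -
  have "[:c, 1:] dvd (pderiv ^^ j) (rodrigues_poly n)" if "[:c, 1:] ^ n dvd rodrigues_poly n" for c
    using dvd_trans[OF _ higher_pderiv_dvd_linear_power[OF that]] assms by simp
  moreover have "[:0, 1:] ^ n dvd rodrigues_poly n" "[:-1, 1:] ^ n dvd rodrigues_poly n"
    by (simp_all add: rodrigues_poly_def monom_altdef)
  ultimately show "poly ((pderiv ^^ j) (rodrigues_poly n)) 0 = 0"
    and "poly ((pderiv ^^ j) (rodrigues_poly n)) 1 = 0"
    by (metis minus_zero poly_eq_0_iff_dvd)+
qed

lemma integral01_mult_higher_pderiv_rodrigues_poly: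
  "j \<le> n \<Longrightarrow> integral01 (q * (pderiv ^^ j) (rodrigues_poly n))
    = (-1) ^ j * integral01 ((pderiv ^^ j) q * rodrigues_poly n)"
proof (induction j arbitrary: q)
  case (Suc j)
  have "integral01 (q * (pderiv ^^ Suc j) (rodrigues_poly n))
      = - integral01 (pderiv q * (pderiv ^^ j) (rodrigues_poly n))"
    using higher_pderiv_rodrigues_poly_vanishes[of j n] Suc.prems by (simp add: integral01_by_parts)
  also have "\<dots> = (-1) ^ Suc j * integral01 ((pderiv ^^ Suc j) q * rodrigues_poly n)"
    using Suc by (simp add: funpow_Suc_right del: funpow.simps)
  finally show ?case .
qed simp

lemma integral01_shleg_poly_orthogonal:
  assumes "m \<noteq> n" shows "integral01 (shleg_poly m * shleg_poly n) = 0"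
proof -
  have "integral01 (shleg_poly m * shleg_poly n) = 0" if "m < n" for m n
  proof -
    have "(pderiv ^^ n) (shleg_poly m) = 0"
      using degree_shleg_poly[of m] that by (intro higher_pderiv_eq_0) simp
    then show ?thesis
      by (simp add: shleg_poly_def[of n] integral01_smult integral01_0
          integral01_mult_higher_pderiv_rodrigues_poly)
  qed
  then show ?thesis using assms by (metis linorder_neqE_nat mult.commute)
qed

lemma integral01_monom_mult_power:
  "integral01 (monom 1 a * [:1, -1:] ^ b) = fact a * fact b / fact (a + b + 1)"
proof (induction b arbitrary: a)
  case 0
  have "monom 1 a = pderiv (monom (1 / real (Suc a)) (Suc a))"
    by (simp add: pderiv_monom del: of_nat_Suc)
  then show ?case by (simp add: integral01_pderiv poly_monom del: of_nat_Suc)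
next
  case (Suc b)
  let ?P = "[:1, -1:] ^ Suc b :: real poly" and ?Q = "monom (1 / real (Suc a)) (Suc a)"
  have "integral01 (monom 1 a * ?P) = integral01 (?P * pderiv ?Q)"
    by (simp add: pderiv_monom mult.commute del: of_nat_Suc)
  also have "\<dots> = - integral01 (pderiv ?P * ?Q)"
    by (simp add: integral01_by_parts poly_monom del: power_Suc)
  also have "pderiv ?P * ?Q
      = smult (- real (Suc b) / real (Suc a)) (monom 1 (Suc a) * [:1, -1:] ^ b)"
    by (rule poly_ext)
       (simp add: pderiv_power_Suc pderiv_pCons poly_monom del: of_nat_Suc power_Suc)
  also have "- integral01 \<dots>
      = real (Suc b) / real (Suc a) * (fact (Suc a) * fact b / fact (Suc a + b + 1))"
    by (simp add: integral01_uminus integral01_smult Suc.IH del: of_nat_Suc)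
  also have "\<dots> = fact a * fact (Suc b) / fact (a + Suc b + 1)"
    by (simp del: of_nat_Suc)
  finally show ?case .
qed

lemma integral01_rodrigues_poly:
  "integral01 (rodrigues_poly n) = (-1) ^ n * (fact n * fact n / fact (n + n + 1))"
proof -
  have "rodrigues_poly n = smult ((-1) ^ n) (monom 1 n * [:1, -1:] ^ n)"
  proof (rule poly_ext)
    fix x :: real
    have "x * (x - 1) = (-1) * (x * (1 - x))" by (simp add: algebra_simps)
    then have "(x * (x - 1)) ^ n = (-1) ^ n * (x * (1 - x)) ^ n" by (metis power_mult_distrib)
    then show "poly (rodrigues_poly n) x = poly (smult ((-1) ^ n) (monom 1 n * [:1, -1:] ^ n)) x"
      by (simp add: rodrigues_poly_def poly_monom power_mult_distrib)
  qed
  then show ?thesis by (simp add: integral01_smult integral01_monom_mult_power)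
qed

lemma higher_pderiv_shleg_poly_self: "(pderiv ^^ n) (shleg_poly n) = [:fact (n + n) / fact n:]"
proof -
  have "degree ((pderiv ^^ n) (shleg_poly n)) = 0"
    using degree_shleg_poly[of n] by (simp add: degree_higher_pderiv)
  then have "(pderiv ^^ n) (shleg_poly n) = [:coeff ((pderiv ^^ n) (shleg_poly n)) 0:]"
    by (rule degree_0_id[symmetric])
  also have "coeff ((pderiv ^^ n) (shleg_poly n)) 0 = fact (n + n) / fact n"
    using coeff_rodrigues_poly[of n n]
    by (simp add: coeff_higher_pderiv_fact shleg_poly_def)
  finally show ?thesis .
qed

lemma integral01_shleg_poly_sq: "integral01 (shleg_poly n * shleg_poly n) = 1 / (2 * real n + 1)"
proof -
  have "integral01 (shleg_poly n * shleg_poly n)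
      = 1 / fact n * integral01 (shleg_poly n * (pderiv ^^ n) (rodrigues_poly n))"
    by (subst (2) shleg_poly_def) (simp add: integral01_smult)
  also have "\<dots> = (-1) ^ n / fact n * integral01 ((pderiv ^^ n) (shleg_poly n) * rodrigues_poly n)"
    by (simp add: integral01_mult_higher_pderiv_rodrigues_poly)
  also have "\<dots> = ((-1) ^ n * (-1) ^ n) * (fact (n + n) / fact (n + n + 1))"
    by (simp add: higher_pderiv_shleg_poly_self integral01_smult integral01_rodrigues_poly)
  also have "(-1::real) ^ n * (-1) ^ n = 1"
    by (simp flip: power_add)
  also have "fact (n + n + 1) = real (n + n + 1) * (fact (n + n) :: real)"
    by (simp only: Suc_eq_plus1[symmetric] fact_Suc)
  finally show ?thesis by simp
qed

lemma poly_affine_has_integral: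
  fixes a b :: real assumes "a < b"
  shows "((\<lambda>x. poly r ((x - a) / (b - a))) has_integral (b - a) * integral01 r) {a..b}"
proof -
  have "(poly r has_integral integral01 r) (cbox 0 1)"
    unfolding integral01_def using poly_integrable_on by (simp add: integrable_integral)
  from has_integral_affinity'[OF this, of "1 / (b - a)" "- a / (b - a)"]
  have "((\<lambda>x. poly r (x / (b - a) - a / (b - a))) has_integral (b - a) * integral01 r)
      {a..(b - a) * (1 + a / (b - a))}"
    using assms by simp
  moreover have "(b - a) * (1 + a / (b - a)) = b"
    using assms by (simp add: field_simps)
  ultimately show ?thesis by (simp add: diff_divide_distrib)
qed

lemma leg1_orthonormal:
  fixes a b :: real assumes "a < b"
  shows "((\<lambda>x. leg1 m a b x * leg1 n a b x) has_integral (if m = n then 1 else 0)) {a..b}"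
proof -
  define K where "K = sqrt ((2 * real m + 1) / (b - a)) * sqrt ((2 * real n + 1) / (b - a))"
  have integrand: "(\<lambda>x. leg1 m a b x * leg1 n a b x)
      = (\<lambda>x. K * poly (shleg_poly m * shleg_poly n) ((x - a) / (b - a)))"
    unfolding leg1_def shleg_eq_poly K_def by (simp add: fun_eq_iff)
  have total: "K * ((b - a) * integral01 (shleg_poly m * shleg_poly n)) = (if m = n then 1 else 0)"
    using assms
    by (cases "m = n")
       (simp_all add: K_def integral01_shleg_poly_sq integral01_shleg_poly_orthogonal
         flip: real_sqrt_mult)
  have "((\<lambda>x. K * poly (shleg_poly m * shleg_poly n) ((x - a) / (b - a))) has_integral
      K * ((b - a) * integral01 (shleg_poly m * shleg_poly n))) {a..b}"
    by (intro has_integral_mult_right poly_affine_has_integral assms)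
  then show ?thesis by (simp only: integrand total)
qed

section \<open>Tensor-product Legendre basis on boxes\<close>

lemma integral_lborel_prod_coordinates:
  fixes f :: "'a::euclidean_space \<Rightarrow> real \<Rightarrow> real"
  assumes "\<And>i. i \<in> Basis \<Longrightarrow> integrable lborel (f i)"
  shows "(\<integral>x. (\<Prod>i\<in>Basis. f i (x \<bullet> i)) \<partial>(lborel :: 'a measure))
    = (\<Prod>i\<in>Basis. integral\<^sup>L lborel (f i))"
proof -
  interpret product_sigma_finite "\<lambda>_::'a. lborel :: real measure" by standard
  have [measurable]: "f i \<in> borel_measurable borel" if "i \<in> Basis" for i
    using borel_measurable_integrable[OF assms[OF that]] by simp
  have "(\<integral>x. (\<Prod>i\<in>Basis. f i (x \<bullet> i)) \<partial>(lborel :: 'a measure))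
      = (\<integral>x. (\<Prod>i\<in>Basis. f i ((\<Sum>i'\<in>Basis. x i' *\<^sub>R i') \<bullet> i)) \<partial>(\<Pi>\<^sub>M i\<in>Basis. lborel))"
    by (subst lborel_eq, subst integral_distr) auto
  also have "\<dots> = (\<integral>x. (\<Prod>i\<in>Basis. f i (x i)) \<partial>(\<Pi>\<^sub>M i\<in>Basis. lborel))"
    by (intro Bochner_Integration.integral_cong refl prod.cong)
       (simp add: inner_sum_left inner_Basis if_distrib sum.delta cong: if_cong)
  also have "\<dots> = (\<Prod>i\<in>Basis. integral\<^sup>L lborel (f i))"
    by (rule product_integral_prod) (auto intro: assms)
  finally show ?thesis .
qed

lemma set_integral_cbox_prod_coordinates:
  fixes a b :: "'a::euclidean_space" and g :: "'a \<Rightarrow> real \<Rightarrow> real"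
  assumes "\<And>i. i \<in> Basis \<Longrightarrow> continuous_on UNIV (g i)"
  shows "(LINT x:cbox a b|lebesgue. (\<Prod>i\<in>Basis. g i (x \<bullet> i)))
    = (\<Prod>i\<in>Basis. integral {a \<bullet> i..b \<bullet> i} (g i))"
proof -
  define h where "h i = (\<lambda>t. indicator {a \<bullet> i..b \<bullet> i} t * g i t)" for i
  have [measurable]: "g i \<in> borel_measurable borel" if "i \<in> Basis" for i
    using assms[OF that] by (rule borel_measurable_continuous_onI)
  have h_integrable: "set_integrable lborel {a \<bullet> i..b \<bullet> i} (g i)" if "i \<in> Basis" for i
    using borel_integrable_compact[of "{a \<bullet> i..b \<bullet> i}" "g i"] assms[OF that]
    by (auto simp: set_integrable_def intro: continuous_on_subset)
  have "indicator (cbox a b) x *\<^sub>R (\<Prod>i\<in>Basis. g i (x \<bullet> i)) = (\<Prod>i\<in>Basis. h i (x \<bullet> i))" for x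
    by (auto simp: h_def prod.distrib cbox_def indicator_def prod.neutral)
  then have "(LINT x:cbox a b|lebesgue. (\<Prod>i\<in>Basis. g i (x \<bullet> i)))
      = (\<integral>x. (\<Prod>i\<in>Basis. h i (x \<bullet> i)) \<partial>lborel)"
    unfolding set_lebesgue_integral_def h_def by (simp add: integral_completion)
  also have "\<dots> = (\<Prod>i\<in>Basis. integral\<^sup>L lborel (h i))"
    using h_integrable
    by (intro integral_lborel_prod_coordinates) (simp add: set_integrable_def h_def)
  also have "\<dots> = (\<Prod>i\<in>Basis. integral {a \<bullet> i..b \<bullet> i} (g i))"
    using set_borel_integral_eq_integral(2)[OF h_integrable]
    by (intro prod.cong refl) (simp add: set_lebesgue_integral_def h_def)
  finally show ?thesis .
qed

lemma
  fixes a b :: "'a::euclidean_space"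
  assumes "\<forall>i\<in>Basis. a \<bullet> i < b \<bullet> i" and "i \<in> Basis"
  shows lo_cbox: "lo (cbox a b) i = a \<bullet> i" and hi_cbox: "hi (cbox a b) i = b \<bullet> i"
proof -
  have "a \<in> cbox a b" "b \<in> cbox a b" using assms(1) by (auto simp: mem_box less_imp_le)
  then show "lo (cbox a b) i = a \<bullet> i" "hi (cbox a b) i = b \<bullet> i"
    unfolding lo_def hi_def using assms(2)
    by (auto simp: mem_box intro!: cInf_eq_minimum cSup_eq_maximum)
qed

definition leg1_poly :: "nat \<Rightarrow> real \<Rightarrow> real \<Rightarrow> real poly" where
  "leg1_poly n a b =
    smult (sqrt ((2 * real n + 1) / (b - a))) (shleg_poly n \<circ>\<^sub>p [:- a / (b - a), 1 / (b - a):])"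

lemma poly_leg1_poly: "poly (leg1_poly n a b) = leg1 n a b"
  by (simp add: fun_eq_iff leg1_poly_def leg1_def poly_pcompose shleg_eq_poly diff_divide_distrib)

lemma degree_leg1_poly: "degree (leg1_poly n a b) \<le> n"
proof -
  have "degree (leg1_poly n a b) \<le> degree (shleg_poly n) * degree [:- a / (b - a), 1 / (b - a):]"
    unfolding leg1_poly_def by (rule order.trans[OF degree_smult_le degree_pcompose_le])
  also have "\<dots> \<le> n"
    using degree_shleg_poly[of n] by (simp add: mult_le_one)
  finally show ?thesis .
qed

lemma continuous_on_leg1: "continuous_on UNIV (leg1 n a b)"
  by (simp flip: poly_leg1_poly add: continuous_on_poly continuous_on_id)

lemma continuous_on_Lam: "continuous_on UNIV (Lam \<iota> k T)"
  unfolding Lam_def legTP_def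
  by (intro continuous_on_prod continuous_on_compose2[OF continuous_on_leg1] continuous_intros) auto

lemma Lam_orthonormal:
  fixes a b :: "'a::euclidean_space"
  assumes "\<forall>i\<in>Basis. a \<bullet> i < b \<bullet> i"
  shows "(LINT x:cbox a b|lebesgue. Lam \<iota> k (cbox a b) x * Lam \<iota> j (cbox a b) x)
       = (if \<forall>i\<in>Basis. \<iota> k i = \<iota> j i then 1 else 0)"
proof -
  define g where "g i t = leg1 (\<iota> k i) (a \<bullet> i) (b \<bullet> i) t * leg1 (\<iota> j i) (a \<bullet> i) (b \<bullet> i) t" for i t
  have "Lam \<iota> k (cbox a b) x * Lam \<iota> j (cbox a b) x = (\<Prod>i\<in>Basis. g i (x \<bullet> i))" for x
    unfolding Lam_def legTP_def g_def prod.distrib[symmetric]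
    by (intro prod.cong refl) (simp add: lo_cbox[OF assms] hi_cbox[OF assms])
  moreover have "(LINT x:cbox a b|lebesgue. (\<Prod>i\<in>Basis. g i (x \<bullet> i)))
      = (\<Prod>i\<in>Basis. integral {a \<bullet> i..b \<bullet> i} (g i))"
    unfolding g_def
    by (intro set_integral_cbox_prod_coordinates continuous_on_mult continuous_on_leg1)
  moreover have "integral {a \<bullet> i..b \<bullet> i} (g i) = (if \<iota> k i = \<iota> j i then 1 else 0)"
    if "i \<in> Basis" for i
    unfolding g_def using assms that by (intro integral_unique leg1_orthonormal) auto
  ultimately show ?thesis by (simp add: prod_zero_iff)
qed

lemma Qp_prod_poly:
  fixes P :: "'a::euclidean_space \<Rightarrow> real poly"
  assumes deg: "\<And>i. i \<in> Basis \<Longrightarrow> degree (P i) \<le> p"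
  shows "Qp p (\<lambda>x. \<Prod>i\<in>Basis. poly (P i) (x \<bullet> i))"
  unfolding Qp_def
proof (intro exI allI)
  fix x :: 'a
  let ?ext = "\<lambda>g i. if i \<in> Basis then g i else 0"
  have "(\<Prod>i\<in>Basis. poly (P i) (x \<bullet> i)) = (\<Prod>i\<in>Basis. \<Sum>k\<le>p. coeff (P i) k * (x \<bullet> i) ^ k)"
    by (intro prod.cong refl poly_eq_sum_coeff_upto deg)
  also have "\<dots> = (\<Sum>g\<in>Basis \<rightarrow>\<^sub>E {..p}. \<Prod>i\<in>Basis. coeff (P i) (g i) * (x \<bullet> i) ^ (g i))"
    by (rule prod_sum_PiE) auto
  also have "\<dots> = (\<Sum>\<alpha>\<in>MI p. \<Prod>i\<in>Basis. coeff (P i) (\<alpha> i) * (x \<bullet> i) ^ (\<alpha> i))"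
    by (rule sum.reindex_bij_witness[where j = ?ext and i = "\<lambda>\<alpha>. restrict \<alpha> Basis"])
       (auto simp: MI_def fun_eq_iff PiE_def extensional_def intro!: prod.cong)
  also have "\<dots> = (\<Sum>\<alpha>\<in>MI p. (\<Prod>i\<in>Basis. coeff (P i) (\<alpha> i)) * mono \<alpha> x)"
    unfolding mono_def by (simp add: prod.distrib)
  finally show "(\<Prod>i\<in>Basis. poly (P i) (x \<bullet> i))
      = (\<Sum>\<alpha>\<in>MI p. (\<Prod>i\<in>Basis. coeff (P i) (\<alpha> i)) * mono \<alpha> x)" .
qed

lemma Qp_zero: "Qp p (\<lambda>_. 0)"
  unfolding Qp_def by (intro exI[of _ "\<lambda>_. 0"]) simp

lemma Lam_Qp:
  assumes "\<iota> k \<in> MI p"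
  shows "Qp p (Lam \<iota> k T)"
proof -
  have "Qp p (\<lambda>x. \<Prod>i\<in>Basis. poly (leg1_poly (\<iota> k i) (lo T i) (hi T i)) (x \<bullet> i))"
    using assms by (intro Qp_prod_poly) (auto simp: MI_def intro: order.trans[OF degree_leg1_poly])
  then show ?thesis by (simp add: Lam_def legTP_def[abs_def] poly_leg1_poly)
qed

section \<open>Meshes and element-wise integrals\<close>

lemma is_meshE:
  assumes "is_mesh Th D" "T \<in> Th"
  obtains a b where "T = cbox a b" "\<forall>i\<in>Basis. a \<bullet> i < b \<bullet> i"
proof -
  have "\<forall>T\<in>Th. \<exists>a b. T = cbox a b \<and> (\<forall>i\<in>Basis. a \<bullet> i < b \<bullet> i)"
    using assms(1) unfolding is_mesh_def by (elim conjE)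
  then show ?thesis using assms(2) that by blast
qed

lemma is_mesh_open: "is_mesh Th D \<Longrightarrow> open D"
  unfolding is_mesh_def by (metis open_interior)

lemma is_mesh_interior_subset: "is_mesh Th D \<Longrightarrow> T \<in> Th \<Longrightarrow> interior T \<subseteq> D"
  unfolding is_mesh_def by (metis Union_upper interior_mono)

lemma is_mesh_interior_disjoint:
  assumes mesh: "is_mesh Th D" and "T \<in> Th" "T' \<in> Th" "T \<noteq> T'"
  shows "interior T' \<inter> T = {}"
proof -
  obtain a b where T: "T = cbox a b" "\<forall>i\<in>Basis. a \<bullet> i < b \<bullet> i"
    using is_meshE[OF mesh \<open>T \<in> Th\<close>] .
  have "\<forall>T\<in>Th. \<forall>T'\<in>Th. T \<noteq> T' \<longrightarrow>
      interior T \<inter> interior T' = {} \<and> (T \<inter> T') face_of T \<and> (T \<inter> T') face_of T'"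
    using mesh unfolding is_mesh_def by (elim conjE)
  then have "interior T \<inter> interior T' = {}"
    using assms(2-4) by blast
  moreover have "closure (interior T) = T"
    using T by (simp add: box_ne_empty)
  ultimately show ?thesis
    using open_Int_closure_eq_empty[of "interior T'" "interior T"] by (simp add: inf_commute)
qed

lemma is_mesh_AE_mem_interior:
  assumes "is_mesh Th D" "T \<in> Th"
  shows "AE x in lebesgue. x \<in> T \<longrightarrow> x \<in> interior T"
proof -
  obtain a b where T: "T = cbox a b" using is_meshE[OF assms] by metis
  have "cbox a b - box a b \<in> null_sets lebesgue"
    using negligible_frontier_interval negligible_iff_null_sets by blast
  from AE_not_in[OF this] show ?thesis
    by eventually_elim (simp add: T)
qed

lemma continuous_on_imp_borel_measurable_lebesgue:
  "continuous_on UNIV f \<Longrightarrow> (f :: 'a::euclidean_space \<Rightarrow> real) \<in> borel_measurable lebesgue"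
  using borel_measurable_continuous_onI[of f] by (intro measurable_completion) simp

lemma abs_le_square_plus_one: "\<bar>t :: real\<bar> \<le> t\<^sup>2 + 1"
proof (cases "\<bar>t\<bar> \<le> 1")
  case False
  then have "\<bar>t\<bar> * 1 \<le> \<bar>t\<bar> * \<bar>t\<bar>" by (intro mult_left_mono) auto
  then show ?thesis by (simp add: power2_eq_square abs_mult_self_eq)
qed (smt (verit) zero_le_power2)

lemma set_integrable_mult_square_integrable:
  fixes u f :: "'a::euclidean_space \<Rightarrow> real"
  assumes u: "u \<in> borel_measurable lebesgue" "integrable lebesgue (\<lambda>x. (u x)\<^sup>2)"
    and f: "continuous_on UNIV f"
  shows "set_integrable lebesgue (cbox l h) (\<lambda>x. u x * f x)"
proof -
  have "compact (f ` cbox l h)"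
    by (intro compact_continuous_image continuous_on_subset[OF f]) auto
  then obtain M where M: "M > 0" "\<And>y. y \<in> f ` cbox l h \<Longrightarrow> norm y \<le> M"
    using compact_imp_bounded bounded_pos by metis
  have box: "integrable lebesgue (\<lambda>x. indicator (cbox l h) x *\<^sub>R (1::real))"
    using absolutely_integrable_continuous[of l h "\<lambda>_. 1::real"] by (simp add: set_integrable_def)
  have bound: "norm (indicator (cbox l h) x *\<^sub>R (u x * f x))
      \<le> norm (M * ((u x)\<^sup>2 + indicator (cbox l h) x *\<^sub>R (1::real)))" for x
  proof (cases "x \<in> cbox l h")
    case True
    have "\<bar>u x * f x\<bar> \<le> \<bar>u x\<bar> * M"
      using M(2)[of "f x"] True by (simp add: abs_mult mult_left_mono)
    also have "\<dots> \<le> ((u x)\<^sup>2 + 1) * M"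
      using abs_le_square_plus_one[of "u x"] M(1) by (intro mult_right_mono) auto
    finally show ?thesis using True M(1) by (simp add: mult.commute)
  qed (use M(1) in simp)
  have [measurable]: "u \<in> borel_measurable lebesgue" "f \<in> borel_measurable lebesgue"
      "cbox l h \<in> sets lebesgue"
    using u(1) continuous_on_imp_borel_measurable_lebesgue[OF f] by (auto intro: fmeasurableD)
  have "(\<lambda>x. indicator (cbox l h) x *\<^sub>R (u x * f x)) \<in> borel_measurable lebesgue"
    by measurable
  then show ?thesis
    unfolding set_integrable_def
    by (intro Bochner_Integration.integrable_bound[OF _ _ AE_I2[OF bound]]
        integrable_mult_right Bochner_Integration.integrable_add u(2) box)
qed

lemma is_mesh_set_integral_element:
  fixes g :: "'a::euclidean_space \<Rightarrow> real"
  assumes mesh: "is_mesh Th D" and T: "T \<in> Th" and g: "g \<in> borel_measurable lebesgue"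
  shows "(LINT x:D|lebesgue. indicator T x * g x) = (LINT x:T|lebesgue. g x)"
  unfolding set_lebesgue_integral_def
proof (rule integral_cong_AE)
  obtain a b where "T = cbox a b" using is_meshE[OF mesh T] by metis
  then have [measurable]: "T \<in> sets lebesgue" by simp
  have [measurable]: "D \<in> sets lebesgue" "g \<in> borel_measurable lebesgue"
    using is_mesh_open[OF mesh] g by (auto intro: borel_open)
  show "(\<lambda>x. indicator D x *\<^sub>R (indicator T x * g x)) \<in> borel_measurable lebesgue"
    by measurable
  show "(\<lambda>x. indicator T x *\<^sub>R g x) \<in> borel_measurable lebesgue"
    by measurable
  show "AE x in lebesgue. indicator D x *\<^sub>R (indicator T x * g x) = indicator T x *\<^sub>R g x"
    using is_mesh_AE_mem_interior[OF mesh T]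
    by eventually_elim (use is_mesh_interior_subset[OF mesh T] in \<open>auto simp: indicator_def\<close>)
qed

lemma VH_extend_by_zero:
  assumes mesh: "is_mesh Th D" and T: "T \<in> Th" and q: "Qp p q" "continuous_on UNIV q"
  shows "VH Th D p (\<lambda>x. if x \<in> T then q x else 0)"
  unfolding VH_def
proof (intro conjI ballI)
  obtain a b where "T = cbox a b" using is_meshE[OF mesh T] by metis
  then have [measurable]: "T \<in> sets lebesgue" by simp
  have [measurable]: "D \<in> sets lebesgue" "q \<in> borel_measurable lebesgue"
    using is_mesh_open[OF mesh] continuous_on_imp_borel_measurable_lebesgue[OF q(2)]
    by (auto intro: borel_open)
  show "(\<lambda>x. indicator D x * (if x \<in> T then q x else 0)) \<in> borel_measurable lebesgue"
    by measurable
  fix T' assume T': "T' \<in> Th"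
  show "\<exists>q'. Qp p q' \<and> (\<forall>x\<in>interior T'. (if x \<in> T then q x else 0) = q' x)"
  proof (cases "T' = T")
    case True
    then show ?thesis using q interior_subset by (intro exI[of _ q]) auto
  next
    case False
    then have "interior T' \<inter> T = {}" using is_mesh_interior_disjoint[OF mesh T T'] by auto
    then show ?thesis using Qp_zero by (intro exI[of _ "\<lambda>_. 0"]) auto
  qed
qed

section \<open>Bubble functions\<close>

lemma IH_eq_0:
  assumes "\<And>T. T \<in> Th \<Longrightarrow> Pi0 v T = 0"
  shows "IH Th D v = (\<lambda>_. 0)"
proof -
  have "nodal Th D (Pi0 v) = (\<lambda>_. 0)"
    using assms by (auto simp: fun_eq_iff nodal_def intro!: sum.neutral)
  then show ?thesis by (simp add: fun_eq_iff IH_def EH_def qinterp_def)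
qed

lemma legendre_enum_eq_iff:
  fixes \<iota> :: "nat \<Rightarrow> 'a::euclidean_space \<Rightarrow> nat"
  assumes "legendre_enum p \<iota>" "j \<in> {1..(p + 1) ^ DIM('a)}" "k \<in> {1..(p + 1) ^ DIM('a)}"
  shows "(\<forall>i\<in>Basis. \<iota> j i = \<iota> k i) \<longleftrightarrow> j = k"
    (is "?coincide \<longleftrightarrow> _")
proof
  have bij: "bij_betw \<iota> {1..(p + 1) ^ DIM('a)} (MI p)"
    using assms(1) by (simp add: legendre_enum_def)
  assume ?coincide
  moreover have "\<iota> j \<in> MI p" "\<iota> k \<in> MI p"
    using bij assms(2,3) by (auto dest: bij_betw_apply)
  ultimately have "\<iota> j = \<iota> k" by (auto simp: MI_def fun_eq_iff)
  then show "j = k"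
    using inj_onD[OF bij_betw_imp_inj_on[OF bij]] assms(2,3) by blast
qed simp

lemma Lam_first:
  assumes "legendre_enum p \<iota>"
  shows "Lam \<iota> 1 T = (\<lambda>_. \<Prod>i\<in>Basis. sqrt (1 / (hi T i - lo T i)))"
  using assms by (simp add: fun_eq_iff legendre_enum_def Lam_def legTP_def leg1_def shleg_def)

context
  fixes Th :: "'a::euclidean_space set set" and D :: "'a set" and p :: nat
    and \<iota> :: "nat \<Rightarrow> 'a \<Rightarrow> nat" and T :: "'a set" and j :: nat and b :: "'a \<Rightarrow> real"
  assumes mesh: "is_mesh Th D" and enum: "legendre_enum p \<iota>" and T: "T \<in> Th"
    and j: "j \<in> {1..(p + 1) ^ DIM('a)}"
    and b_H10: "H10 T b"
    and b_proj: "L2proj Th D p b (\<lambda>x. if x \<in> T then Lam \<iota> j T x else 0)"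
begin

lemma bubble_moment_outside:
  assumes "T' \<in> Th" "T' \<noteq> T"
  shows "(LINT y:T'|lebesgue. b y * f y) = 0"
proof -
  have "AE y in lebesgue. indicator T' y *\<^sub>R (b y * f y) = 0"
    using is_mesh_AE_mem_interior[OF mesh assms(1)]
  proof eventually_elim
    case (elim y)
    then have "y \<notin> T" if "y \<in> T'"
      using that is_mesh_interior_disjoint[OF mesh T assms(1)] assms(2) by auto
    then show ?case using b_H10 by (auto simp: H10_def indicator_def)
  qed
  then show ?thesis unfolding set_lebesgue_integral_def by (rule integral_eq_zero_AE)
qed

lemma bubble_moment_Lam:
  assumes k: "k \<in> {1..(p + 1) ^ DIM('a)}"
  shows "(LINT y:T|lebesgue. b y * Lam \<iota> k T y) = (if k = j then 1 else 0)"
proof -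
  obtain l h where T_box: "T = cbox l h" and lh: "\<forall>i\<in>Basis. l \<bullet> i < h \<bullet> i"
    using is_meshE[OF mesh T] .
  have b_L2: "b \<in> borel_measurable lebesgue" "integrable lebesgue (\<lambda>x. (b x)\<^sup>2)"
    using b_H10 by (auto simp: H10_def H1_def sq_int_def)
  have [measurable]: "b \<in> borel_measurable lebesgue"
      "Lam \<iota> k T \<in> borel_measurable lebesgue" "Lam \<iota> j T \<in> borel_measurable lebesgue"
    using b_L2 by (auto intro: continuous_on_imp_borel_measurable_lebesgue continuous_on_Lam)
  have "\<iota> k \<in> MI p"
    using enum k by (auto simp: legendre_enum_def dest: bij_betw_apply)
  then have "VH Th D p (\<lambda>x. if x \<in> T then Lam \<iota> k T x else 0)"
    by (intro VH_extend_by_zero[OF mesh T] Lam_Qp continuous_on_Lam)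
  then have "0 = (LINT x:D|lebesgue.
      (b x - (if x \<in> T then Lam \<iota> j T x else 0)) * (if x \<in> T then Lam \<iota> k T x else 0))"
    using b_proj by (simp add: L2proj_def)
  also have "\<dots> = (LINT x:D|lebesgue. indicator T x * ((b x - Lam \<iota> j T x) * Lam \<iota> k T x))"
    by (rule arg_cong[where f = "set_lebesgue_integral lebesgue D"])
       (simp add: fun_eq_iff indicator_def)
  also have "\<dots> = (LINT x:T|lebesgue. (b x - Lam \<iota> j T x) * Lam \<iota> k T x)"
    by (rule is_mesh_set_integral_element[OF mesh T]) measurable
  also have "\<dots> = (LINT x:T|lebesgue. b x * Lam \<iota> k T x)
      - (LINT x:T|lebesgue. Lam \<iota> j T x * Lam \<iota> k T x)"
    unfolding left_diff_distrib
  proof (rule set_integral_diff(2))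
    show "set_integrable lebesgue T (\<lambda>x. b x * Lam \<iota> k T x)"
      unfolding T_box by (intro set_integrable_mult_square_integrable b_L2 continuous_on_Lam)
    show "set_integrable lebesgue T (\<lambda>x. Lam \<iota> j T x * Lam \<iota> k T x)"
      unfolding T_box by (intro absolutely_integrable_continuous continuous_on_mult
          continuous_on_subset[OF continuous_on_Lam]) auto
  qed
  also have "(LINT x:T|lebesgue. Lam \<iota> j T x * Lam \<iota> k T x) = (if k = j then 1 else 0)"
    unfolding T_box Lam_orthonormal[OF lh] using legendre_enum_eq_iff[OF enum j k] by auto
  finally show ?thesis by simp
qed

lemma Pi0_bubble_eq_0:
  assumes "j \<noteq> 1" "T' \<in> Th"
  shows "Pi0 b T' = 0"
proof (cases "T' = T")
  case True
  obtain l h where T_box: "T = cbox l h" and lh: "\<forall>i\<in>Basis. l \<bullet> i < h \<bullet> i"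
    using is_meshE[OF mesh T] .
  define c where "c = (\<Prod>i\<in>Basis. sqrt (1 / (hi T i - lo T i)))"
  have "c \<noteq> 0"
    using lh by (auto simp: c_def T_box lo_cbox hi_cbox)
  have "(LINT y:T|lebesgue. b y) * c = (LINT y:T|lebesgue. b y * c)"
    unfolding set_lebesgue_integral_def by (simp add: mult.assoc[symmetric])
  also have "\<dots> = (LINT y:T|lebesgue. b y * Lam \<iota> 1 T y)"
    unfolding Lam_first[OF enum] c_def ..
  also have "\<dots> = 0"
    using bubble_moment_Lam[of 1] assms(1) by simp
  finally show ?thesis
    using \<open>c \<noteq> 0\<close> True by (simp add: Pi0_def)
next
  case False
  then show ?thesis
    using bubble_moment_outside[OF assms(2) False, of "\<lambda>_. 1"] by (simp add: Pi0_def)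
qed

lemma BH_bubble: "BH Th p \<iota> bf b = bf j T"
proof
  fix x
  let ?moment = "\<lambda>k T'. (LINT y:T'|lebesgue. b y * Lam \<iota> k T' y)"
  have "finite Th" using mesh by (simp add: is_mesh_def)
  then have "BH Th p \<iota> bf b x = (\<Sum>k\<in>{1..(p + 1) ^ DIM('a)}. ?moment k T * bf k T x)
      + (\<Sum>T'\<in>Th - {T}. \<Sum>k\<in>{1..(p + 1) ^ DIM('a)}. ?moment k T' * bf k T' x)"
    unfolding BH_def by (rule sum.remove[OF _ T])
  also have "(\<Sum>T'\<in>Th - {T}. \<Sum>k\<in>{1..(p + 1) ^ DIM('a)}. ?moment k T' * bf k T' x) = 0"
    by (intro sum.neutral ballI) (auto simp: bubble_moment_outside)
  also have "(\<Sum>k\<in>{1..(p + 1) ^ DIM('a)}. ?moment k T * bf k T x)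
      = (\<Sum>k\<in>{1..(p + 1) ^ DIM('a)}. if k = j then bf k T x else 0)"
    by (intro sum.cong refl) (simp add: bubble_moment_Lam)
  also have "\<dots> = bf j T x"
    using j by simp
  finally show "BH Th p \<iota> bf b x = bf j T x" by simp
qed

end

theorem mainTheorem6:
  fixes Th :: "'a::euclidean_space set set" and D :: "'a set" and p :: nat
    and \<iota> :: "nat \<Rightarrow> 'a \<Rightarrow> nat" and bf :: "nat \<Rightarrow> 'a set \<Rightarrow> 'a \<Rightarrow> real"
    and T :: "'a set" and j :: nat
  assumes mesh: "is_mesh Th D"
    and enum: "legendre_enum p \<iota>"
    and bubbles: "\<forall>T'\<in>Th. \<forall>k\<in>{1..(p + 1) ^ DIM('a)}.
                    H10 T' (bf k T') \<and>
                    L2proj Th D p (bf k T') (\<lambda>x. if x \<in> T' then Lam \<iota> k T' x else 0)"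
    and T: "T \<in> Th"
    and j: "j \<in> {2..(p + 1) ^ DIM('a)}"
  shows "PH Th D p \<iota> bf (bf j T) = bf j T"
proof -
  have j_range: "j \<in> {1..(p + 1) ^ DIM('a)}" and "j \<noteq> 1"
    using j by auto
  have H10: "H10 T (bf j T)"
    and proj: "L2proj Th D p (bf j T) (\<lambda>x. if x \<in> T then Lam \<iota> j T x else 0)"
    using bubbles T j_range by blast+
  note bubble = mesh enum T j_range H10 proj
  have "IH Th D (bf j T) = (\<lambda>_. 0)"
    by (intro IH_eq_0 Pi0_bubble_eq_0[OF bubble \<open>j \<noteq> 1\<close>])
  then show ?thesis
    by (simp add: fun_eq_iff PH_def BH_bubble[OF bubble])
qed

end
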